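(* Let $\mu$ be a finite signed Borel measure on a Borel set $C\subseteq\mathbb{R}$, let $\alpha\in\mathbb{R}$ and let $g$ be a complex-valued function on $C$; for each $z$ fix a value $g(z)^\alpha\in\mathbb{C}$ and put $r(k,z)=g(z)^{\alpha k}:=(g(z)^\alpha)^k$. Suppose $\phi:\mathbb{N}\cup\{0\}\to\mathbb{C}$ satisfies $\phi(k)=\int_C r(k,z)\,\mu(dz)$ for all $k\in\mathbb{N}\cup\{0\}$. Let $\gamma,\sigma:[a,b]\to V$ be continuous paths of bounded variation and set $a_k(s,t)=\langle S(\gamma)^k_{a,s},S(\sigma)^k_{a,t}\rangle_k$. Assume that for every $(s,t)\in[a,b]^2$: (1) $\int_C|r(k,z)|\,|\mu|(dz)<\infty$ for every $k$, and (2) the series $\sum_k a_k(s,t)\int_C|r(k,z)|\,|\mu|(dz)$ converges absolutely. Then for every $(s,t)\in[a,b]^2$, \[ \langle S(\gamma)_{a,s},S(\sigma)_{a,t}\rangle_\phi=\int_C K^{g(z)^\alpha\gamma,\sigma}(s,t)\,\mu(dz). \]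
   Context: $V$ is a finite-dimensional real inner product space, $\langle\cdot,\cdot\rangle_k$ the induced Hilbert–Schmidt inner product on $V^{\otimes k}$. Signature: $S(\gamma)^0=1$, $S(\gamma)^k_{s,t}=\int_{s<u_1<\dots<u_k<t}d\gamma_{u_1}\otimes\cdots\otimes d\gamma_{u_k}$. For complex $\phi$, $\langle S(\gamma)_{a,s},S(\sigma)_{a,t}\rangle_\phi:=\sum_{k\ge0}\phi(k)a_k(s,t)$. For $w\in\mathbb{C}$, the (original) signature kernel of the rescaled path is $K^{w\gamma,\sigma}(s,t):=\sum_{k\ge0}w^k a_k(s,t)$. $|\mu|$ denotes the total variation measure. *)

theory Defs
  imports "HOL-Probability.Probability"
begin

definition bounded_variation_on :: "(real \<Rightarrow> 'v::real_normed_vector) \<Rightarrow> real \<Rightarrow> real \<Rightarrow> bool" where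
  "bounded_variation_on \<gamma> a b \<longleftrightarrow>
     bdd_above {(\<Sum>j<n. norm (\<gamma> (x (Suc j)) - \<gamma> (x j))) | n x.
                 x 0 = a \<and> x n = b \<and> (\<forall>j<n. x j \<le> x (Suc j))}"

definition RS_has_integral :: "(real \<Rightarrow> real) \<Rightarrow> (real \<Rightarrow> real) \<Rightarrow> real \<Rightarrow> real \<Rightarrow> real \<Rightarrow> bool" where
  "RS_has_integral f g s t I \<longleftrightarrow>
     (\<forall>\<epsilon>>0. \<exists>\<delta>>0. \<forall>n x \<xi>. x 0 = s \<and> x n = t \<and>
        (\<forall>j<n. x j \<le> \<xi> j \<and> \<xi> j \<le> x (Suc j) \<and> x (Suc j) - x j < \<delta>) \<longrightarrow>
        \<bar>(\<Sum>j<n. f (\<xi> j) * (g (x (Suc j)) - g (x j))) - I\<bar> < \<epsilon>)"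

definition RS_integral :: "(real \<Rightarrow> real) \<Rightarrow> (real \<Rightarrow> real) \<Rightarrow> real \<Rightarrow> real \<Rightarrow> real" where
  "RS_integral f g s t = (THE I. RS_has_integral f g s t I)"

text \<open>Coordinates of the level-k signature S(gamma)^k_{a,t} w.r.t. the orthonormal basis
  e_{i_1} \<otimes> ... \<otimes> e_{i_k} of V^{\<otimes> k} (e_i ranging over Basis).  Words are stored
  REVERSED: the head of the list is the last letter i_k, so that
  sig_coeff gamma a (i # w) t = int_a^t sig_coeff gamma a w u d(gamma_u . i).\<close>
fun sig_coeff :: "(real \<Rightarrow> 'v::euclidean_space) \<Rightarrow> real \<Rightarrow> 'v list \<Rightarrow> real \<Rightarrow> real" where
  "sig_coeff \<gamma> a [] t = 1"
| "sig_coeff \<gamma> a (i # w) t = RS_integral (\<lambda>u. sig_coeff \<gamma> a w u) (\<lambda>u. \<gamma> u \<bullet> i) a t"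

definition sig_inner :: "(real \<Rightarrow> 'v::euclidean_space) \<Rightarrow> (real \<Rightarrow> 'v) \<Rightarrow> real \<Rightarrow> nat \<Rightarrow> real \<Rightarrow> real \<Rightarrow> real" where
  "sig_inner \<gamma> \<sigma> a k s t =
     (\<Sum>w\<in>{w. length w = k \<and> set w \<subseteq> Basis}. sig_coeff \<gamma> a w s * sig_coeff \<sigma> a w t)"

definition phi_sig_kernel :: "(nat \<Rightarrow> complex) \<Rightarrow> (real \<Rightarrow> 'v::euclidean_space) \<Rightarrow> (real \<Rightarrow> 'v) \<Rightarrow> real \<Rightarrow> real \<Rightarrow> real \<Rightarrow> complex" where
  "phi_sig_kernel \<phi> \<gamma> \<sigma> a s t = (\<Sum>k. \<phi> k * complex_of_real (sig_inner \<gamma> \<sigma> a k s t))"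

text \<open>Signature kernel of the rescaled path: K^{w gamma, sigma}(s,t) = sum_k w^k a_k(s,t).\<close>
definition sig_kernel_scaled :: "complex \<Rightarrow> (real \<Rightarrow> 'v::euclidean_space) \<Rightarrow> (real \<Rightarrow> 'v) \<Rightarrow> real \<Rightarrow> real \<Rightarrow> real \<Rightarrow> complex" where
  "sig_kernel_scaled w \<gamma> \<sigma> a s t = (\<Sum>k. w ^ k * complex_of_real (sig_inner \<gamma> \<sigma> a k s t))"

end

theory Submission
  imports Defs
begin

text \<open>For fixed (s,t) this is termwise integration of a series against the two parts Mp, Mn
  of \<mu>.  The hypothesis bounds \<Sum>k |a_k(s,t)| \<integral>|g(z)^(\<alpha>k)| d|\<mu>|, so by Tonelli the series
  \<Sum>k a_k(s,t) g(z)^(\<alpha>k) converges absolutely for |\<mu>|-almost every z, and dominated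
  convergence integrates it term by term.  Beyond measurability of z \<mapsto> g(z)^\<alpha> and these
  integrability hypotheses nothing is used: neither the signature structure of a_k, nor the
  mutual singularity of Mp and Mn, nor the choice of branch of g^\<alpha>.\<close>

lemma AE_summable_norm_of_summable_integral_norm:
  fixes f :: "nat \<Rightarrow> 'a \<Rightarrow> 'b::{banach, second_countable_topology}"
  assumes integrable: "\<And>i. integrable M (f i)"
    and summable: "summable (\<lambda>i. \<integral>x. norm (f i x) \<partial>M)"
  shows "AE x in M. summable (\<lambda>i. norm (f i x))"
proof -
  have [measurable]: "f i \<in> borel_measurable M" for i
    using integrable by auto
  have "(\<integral>\<^sup>+ x. (\<Sum>i. ennreal (norm (f i x))) \<partial>M) = (\<Sum>i. \<integral>\<^sup>+ x. norm (f i x) \<partial>M)"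
    by (intro nn_integral_suminf) auto
  also have "\<dots> = (\<Sum>i. ennreal (\<integral>x. norm (f i x) \<partial>M))"
    by (intro arg_cong[where f=suminf] ext nn_integral_eq_integral integrable_norm integrable) auto
  also have "\<dots> \<noteq> \<infinity>"
    unfolding infinity_ennreal_def by (rule ennreal_suminf_neq_top[OF summable]) simp
  finally have "AE x in M. (\<Sum>i. ennreal (norm (f i x))) \<noteq> \<infinity>"
    by (intro nn_integral_PInf_AE) measurable
  then show ?thesis
    by eventually_elim (simp add: summable_suminf_not_top)
qed

lemma sums_integral_of_summable_integral_norm:
  fixes f :: "nat \<Rightarrow> 'a \<Rightarrow> 'b::{banach, second_countable_topology}"
  assumes "\<And>i. integrable M (f i)"
    and "summable (\<lambda>i. \<integral>x. norm (f i x) \<partial>M)"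
  shows "(\<lambda>i. integral\<^sup>L M (f i)) sums (\<integral>x. (\<Sum>i. f i x) \<partial>M)"
  using assms by (intro sums_integral AE_summable_norm_of_summable_integral_norm)

lemma sums_integral_power_series:
  fixes w :: "'a \<Rightarrow> 'b::{real_normed_field, banach, second_countable_topology}"
    and c :: "nat \<Rightarrow> real"
  assumes integrable: "\<And>k. integrable M (\<lambda>z. w z ^ k)"
    and summable: "summable (\<lambda>k. \<bar>c k\<bar> * (\<integral>z. norm (w z ^ k) \<partial>M))"
  shows "(\<lambda>k. (\<integral>z. w z ^ k \<partial>M) * of_real (c k)) sums (\<integral>z. (\<Sum>k. w z ^ k * of_real (c k)) \<partial>M)"
proof -
  have "(\<integral>z. norm (w z ^ k * of_real (c k)) \<partial>M) = \<bar>c k\<bar> * (\<integral>z. norm (w z ^ k) \<partial>M)" for k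
    by (simp add: norm_mult mult.commute)
  then have "(\<lambda>k. \<integral>z. w z ^ k * of_real (c k) \<partial>M) sums (\<integral>z. (\<Sum>k. w z ^ k * of_real (c k)) \<partial>M)"
    using integrable summable by (intro sums_integral_of_summable_integral_norm) simp_all
  then show ?thesis
    by simp
qed

lemma summable_abs_mult_of_summable_abs_mult_add:
  fixes c p q :: "nat \<Rightarrow> real"
  assumes "summable (\<lambda>k. \<bar>c k * (p k + q k)\<bar>)" and "\<And>k. 0 \<le> p k" and "\<And>k. 0 \<le> q k"
  shows "summable (\<lambda>k. \<bar>c k\<bar> * p k)"
  using assms by (intro summable_comparison_test'[OF assms(1)])
    (simp add: abs_mult mult_left_mono)

theorem mainTheorem3:
  fixes C :: "real set" and Mp Mn :: "real measure" and \<alpha> :: real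
    and g ga :: "real \<Rightarrow> complex" and \<phi> :: "nat \<Rightarrow> complex"
    and \<gamma> \<sigma> :: "real \<Rightarrow> 'v::euclidean_space" and a b :: real
  assumes C_borel: "C \<in> sets borel"
    and Mp_borel: "sets Mp = sets (restrict_space borel C)"
    and Mn_borel: "sets Mn = sets (restrict_space borel C)"
    and Mp_fin: "finite_measure Mp" and Mn_fin: "finite_measure Mn"
    and singular: "\<exists>A \<in> sets (restrict_space borel C). emeasure Mp (C - A) = 0 \<and> emeasure Mn A = 0"
    and ga_meas: "ga \<in> borel_measurable (restrict_space borel C)"
    and ga_pow: "\<forall>z\<in>C. g z \<noteq> 0 \<longrightarrow> (\<exists>L. exp L = g z \<and> ga z = exp (complex_of_real \<alpha> * L))"
    and phi_def: "\<forall>k. \<phi> k = (CLINT z|Mp. ga z ^ k) - (CLINT z|Mn. ga z ^ k)"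
    and \<gamma>_cont: "continuous_on {a..b} \<gamma>" and \<gamma>_bv: "bounded_variation_on \<gamma> a b"
    and \<sigma>_cont: "continuous_on {a..b} \<sigma>" and \<sigma>_bv: "bounded_variation_on \<sigma> a b"
    and fin_int: "\<forall>s\<in>{a..b}. \<forall>t\<in>{a..b}. \<forall>k.
          (\<integral>\<^sup>+ z. ennreal (norm (ga z ^ k)) \<partial>Mp) < \<infinity> \<and> (\<integral>\<^sup>+ z. ennreal (norm (ga z ^ k)) \<partial>Mn) < \<infinity>"
    and abs_conv: "\<forall>s\<in>{a..b}. \<forall>t\<in>{a..b}.
          summable (\<lambda>k. \<bar>sig_inner \<gamma> \<sigma> a k s t *
             ((\<integral>z. norm (ga z ^ k) \<partial>Mp) + (\<integral>z. norm (ga z ^ k) \<partial>Mn))\<bar>)"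
  shows "\<forall>s\<in>{a..b}. \<forall>t\<in>{a..b}.
           phi_sig_kernel \<phi> \<gamma> \<sigma> a s t =
             (CLINT z|Mp. sig_kernel_scaled (ga z) \<gamma> \<sigma> a s t)
             - (CLINT z|Mn. sig_kernel_scaled (ga z) \<gamma> \<sigma> a s t)"
proof (intro ballI)
  fix s t assume s: "s \<in> {a..b}" and t: "t \<in> {a..b}"
  let ?c = "\<lambda>k. sig_inner \<gamma> \<sigma> a k s t"
  let ?Ip = "\<lambda>k. \<integral>z. norm (ga z ^ k) \<partial>Mp" and ?In = "\<lambda>k. \<integral>z. norm (ga z ^ k) \<partial>Mn"
  have "ga \<in> borel_measurable Mp" "ga \<in> borel_measurable Mn"
    using ga_meas measurable_cong_sets[OF Mp_borel refl] measurable_cong_sets[OF Mn_borel refl]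
    by auto
  then have int_p: "integrable Mp (\<lambda>z. ga z ^ k)" and int_n: "integrable Mn (\<lambda>z. ga z ^ k)" for k
    using fin_int s t by (auto intro!: integrableI_bounded)
  have "summable (\<lambda>k. \<bar>?c k * (?Ip k + ?In k)\<bar>)"
    using abs_conv s t by blast
  then have "summable (\<lambda>k. \<bar>?c k\<bar> * ?Ip k)" "summable (\<lambda>k. \<bar>?c k\<bar> * ?In k)"
    by (auto intro: summable_abs_mult_of_summable_abs_mult_add[where q = ?In]
        summable_abs_mult_of_summable_abs_mult_add[where q = ?Ip] simp: add.commute)
  from sums_diff[OF sums_integral_power_series[OF int_p this(1)]
      sums_integral_power_series[OF int_n this(2)]]
  have "(\<lambda>k. \<phi> k * of_real (?c k)) sums
          ((CLINT z|Mp. sig_kernel_scaled (ga z) \<gamma> \<sigma> a s t) - (CLINT z|Mn. sig_kernel_scaled (ga z) \<gamma> \<sigma> a s t))"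
    unfolding sig_kernel_scaled_def by (simp only: phi_def left_diff_distrib)
  then show "phi_sig_kernel \<phi> \<gamma> \<sigma> a s t =
             (CLINT z|Mp. sig_kernel_scaled (ga z) \<gamma> \<sigma> a s t)
             - (CLINT z|Mn. sig_kernel_scaled (ga z) \<gamma> \<sigma> a s t)"
    unfolding phi_sig_kernel_def by (rule sums_unique[symmetric])
qed

end
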